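(* For all sufficiently large $n$ the following holds for every $1\le k\le n$. Fix a recipient coordinate $i\in[n]$ and vectors $(z_j)_{j\ne i}$ in $V=\mathbb F_2^k$. If the $i$-fibre $\{(z_1,\dots,z_{i-1},u,z_{i+1},\dots,z_n):u\in V\}$ intersects $\mathcal G_{\mathrm{tr}}$, then the kernel $K_i$ on $V$ defined by $K_i\varphi(u)=\frac1{n-1}\sum_{j\ne i}\varphi(u+z_j)$ has spectral gap at least $1/2$ with respect to the uniform measure on $V$.
   Context: $V=\mathbb F_2^k$, $\mathrm{St}(n,k)=\{(z_1,\dots,z_n)\in V^n:\operatorname{span}(z_1,\dots,z_n)=V\}$. For $\xi$ in the dual $V^*$, $\chi_\xi(u)=(-1)^{\xi(u)}$ and $S_\xi(z)=\sum_{i=1}^n\chi_\xi(z_i)$. The good set is $\mathcal G_{\mathrm{tr}}=\{z\in\mathrm{St}(n,k):\max_{0\ne\xi\in V^*}|S_\xi(z)|\le n/4\}$. The spectral gap of a reversible kernel $K$ with stationary law $\rho$ is the largest $\gamma$ with $\gamma\operatorname{Var}_\rho(f)\le\frac12\sum_{x,y}\rho(x)K(x,y)(f(x)-f(y))^2$ for all real $f$. *)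

theory Defs
  imports Complex_Main
begin

text \<open>The space V = F_2^k, modelled as functions nat => bool vanishing from index k on;
  True stands for 1 in F_2 and addition is pointwise exclusive or.\<close>

definition Vsp :: "nat \<Rightarrow> (nat \<Rightarrow> bool) set" where
  "Vsp k = {u. \<forall>j\<ge>k. \<not> u j}"

definition vadd :: "(nat \<Rightarrow> bool) \<Rightarrow> (nat \<Rightarrow> bool) \<Rightarrow> (nat \<Rightarrow> bool)" where
  "vadd u v = (\<lambda>j. u j \<noteq> v j)"

definition vsum :: "(nat \<Rightarrow> nat \<Rightarrow> bool) \<Rightarrow> nat set \<Rightarrow> (nat \<Rightarrow> bool)" where
  "vsum z J = (\<lambda>c. odd (card {j\<in>J. z j c}))"

definition span2 :: "nat \<Rightarrow> (nat \<Rightarrow> nat \<Rightarrow> bool) \<Rightarrow> (nat \<Rightarrow> bool) set" where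
  "span2 n z = {vsum z J | J. J \<subseteq> {0..<n}}"

definition St :: "nat \<Rightarrow> nat \<Rightarrow> (nat \<Rightarrow> nat \<Rightarrow> bool) set" where
  "St n k = {z. (\<forall>j<n. z j \<in> Vsp k) \<and> span2 n z = Vsp k}"

definition dual_lin :: "nat \<Rightarrow> ((nat \<Rightarrow> bool) \<Rightarrow> bool) \<Rightarrow> bool" where
  "dual_lin k \<xi> = (\<forall>u\<in>Vsp k. \<forall>v\<in>Vsp k. \<xi> (vadd u v) = (\<xi> u \<noteq> \<xi> v))"

definition chi :: "((nat \<Rightarrow> bool) \<Rightarrow> bool) \<Rightarrow> (nat \<Rightarrow> bool) \<Rightarrow> real" where
  "chi \<xi> u = (if \<xi> u then -1 else 1)"

definition Sxi :: "nat \<Rightarrow> ((nat \<Rightarrow> bool) \<Rightarrow> bool) \<Rightarrow> (nat \<Rightarrow> nat \<Rightarrow> bool) \<Rightarrow> real" where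
  "Sxi n \<xi> z = (\<Sum>j<n. chi \<xi> (z j))"

definition Gtr :: "nat \<Rightarrow> nat \<Rightarrow> (nat \<Rightarrow> nat \<Rightarrow> bool) set" where
  "Gtr n k = {z \<in> St n k. \<forall>\<xi>. dual_lin k \<xi> \<and> (\<exists>u\<in>Vsp k. \<xi> u) \<longrightarrow> \<bar>Sxi n \<xi> z\<bar> \<le> real n / 4}"

definition variance_on :: "'a set \<Rightarrow> ('a \<Rightarrow> real) \<Rightarrow> ('a \<Rightarrow> real) \<Rightarrow> real" where
  "variance_on X \<rho> f = (\<Sum>x\<in>X. \<rho> x * (f x - (\<Sum>y\<in>X. \<rho> y * f y))\<^sup>2)"

definition dirichlet_form :: "'a set \<Rightarrow> ('a \<Rightarrow> real) \<Rightarrow> ('a \<Rightarrow> 'a \<Rightarrow> real) \<Rightarrow> ('a \<Rightarrow> real) \<Rightarrow> real" where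
  "dirichlet_form X \<rho> K f = (1/2) * (\<Sum>x\<in>X. \<Sum>y\<in>X. \<rho> x * K x y * (f x - f y)\<^sup>2)"

definition spectral_gap :: "'a set \<Rightarrow> ('a \<Rightarrow> real) \<Rightarrow> ('a \<Rightarrow> 'a \<Rightarrow> real) \<Rightarrow> real" where
  "spectral_gap X \<rho> K = Sup {\<gamma>. \<forall>f. \<gamma> * variance_on X \<rho> f \<le> dirichlet_form X \<rho> K f}"

definition unifV :: "nat \<Rightarrow> (nat \<Rightarrow> bool) \<Rightarrow> real" where
  "unifV k u = 1 / 2 ^ k"

text \<open>Kernel K_i: K_i phi(u) = 1/(n-1) sum_(j ~= i) phi(u + z_j), i.e.
  K_i(u,v) = #{j ~= i. v = u + z_j} / (n-1).\<close>
definition Ki :: "nat \<Rightarrow> nat \<Rightarrow> (nat \<Rightarrow> nat \<Rightarrow> bool) \<Rightarrow> (nat \<Rightarrow> bool) \<Rightarrow> (nat \<Rightarrow> bool) \<Rightarrow> real" where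
  "Ki n i z u v = real (card {j\<in>{0..<n} - {i}. v = vadd u (z j)}) / (real n - 1)"

end

theory Submission
  imports Defs
begin

text \<open>The Walsh functions, i.e. the characters of \<open>V = F_2^k\<close>, diagonalise every Cayley
  kernel on \<open>V\<close>: the character of \<open>w\<close> is an eigenfunction of \<open>K_i\<close> with eigenvalue the average of
  \<open>\<chi>_w(z_j)\<close> over \<open>j \<noteq> i\<close>, so the spectral gap is \<open>1\<close> minus the largest such average over
  \<open>w \<noteq> 0\<close>. If some point of the \<open>i\<close>-fibre lies in \<open>G_tr\<close>, then \<open>|S_\<xi>| \<le> n/4\<close> there for every nonzero
  \<open>\<xi>\<close>; dropping coordinate \<open>i\<close> changes the sum by at most \<open>1\<close>, so every nontrivial eigenvalue is
  at most \<open>(n/4 + 1)/(n - 1) \<le> 1/2\<close> once \<open>n \<ge> 6\<close>.\<close>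

abbreviation vzero :: "nat \<Rightarrow> bool" where
  "vzero \<equiv> \<lambda>_. False"

lemma Vsp_eq_image_Pow: "Vsp k = (\<lambda>A c. c \<in> A) ` Pow {..<k}"
proof (rule set_eqI, rule iffI)
  fix u assume "u \<in> Vsp k"
  hence "{c. u c} \<in> Pow {..<k}" unfolding Vsp_def by (auto simp: not_le[symmetric])
  moreover have "u = (\<lambda>c. c \<in> {c. u c})" by simp
  ultimately show "u \<in> (\<lambda>A c. c \<in> A) ` Pow {..<k}" by blast
next
  fix u assume "u \<in> (\<lambda>A c. c \<in> A) ` Pow {..<k}"
  thus "u \<in> Vsp k" unfolding Vsp_def by auto
qed

lemma finite_Vsp [simp]: "finite (Vsp k)"
  unfolding Vsp_eq_image_Pow by simp

lemma card_Vsp: "card (Vsp k) = 2 ^ k"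
proof -
  have "inj_on (\<lambda>A c. c \<in> A) (Pow {..<k})"
    by (rule inj_onI) (auto simp: fun_eq_iff)
  thus ?thesis unfolding Vsp_eq_image_Pow by (simp add: card_image card_Pow)
qed

lemma vzero_in_Vsp [simp]: "vzero \<in> Vsp k"
  unfolding Vsp_def by auto

lemma vadd_in_Vsp: "u \<in> Vsp k \<Longrightarrow> v \<in> Vsp k \<Longrightarrow> vadd u v \<in> Vsp k"
  unfolding Vsp_def vadd_def by auto

lemma vadd_vadd_cancel [simp]: "vadd (vadd u a) a = u"
  unfolding vadd_def by auto

lemma vadd_eq_vzero_iff: "vadd u v = vzero \<longleftrightarrow> u = v"
  unfolding vadd_def by (auto simp: fun_eq_iff)

lemma bij_betw_vadd: "a \<in> Vsp k \<Longrightarrow> bij_betw (\<lambda>u. vadd u a) (Vsp k) (Vsp k)"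
  by (rule bij_betw_byWitness[where f' = "\<lambda>u. vadd u a"]) (auto simp: vadd_in_Vsp)

lemma odd_card_sym_diff:
  assumes "finite A" "finite B"
  shows "odd (card ((A - B) \<union> (B - A))) \<longleftrightarrow> odd (card A) \<noteq> odd (card B)"
proof -
  have "card (A \<union> B) = card ((A - B) \<union> (B - A) \<union> (A \<inter> B))"
    by (intro arg_cong[where f = card]) auto
  also have "\<dots> = card ((A - B) \<union> (B - A)) + card (A \<inter> B)"
    using assms by (intro card_Un_disjoint) auto
  finally show ?thesis
    using card_Un_Int[OF assms] by presburger
qed

definition vdot :: "nat \<Rightarrow> (nat \<Rightarrow> bool) \<Rightarrow> (nat \<Rightarrow> bool) \<Rightarrow> bool" where
  "vdot k w u = odd (card {c. c < k \<and> w c \<and> u c})"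

definition walsh :: "nat \<Rightarrow> (nat \<Rightarrow> bool) \<Rightarrow> (nat \<Rightarrow> bool) \<Rightarrow> real" where
  "walsh k w u = chi (vdot k w) u"

lemma vdot_commute: "vdot k w u = vdot k u w"
  unfolding vdot_def by (simp add: conj_commute)

lemma vdot_vadd_right: "vdot k w (vadd u v) \<longleftrightarrow> vdot k w u \<noteq> vdot k w v"
proof -
  let ?A = "{c. c < k \<and> w c \<and> u c}" and ?B = "{c. c < k \<and> w c \<and> v c}"
  have "{c. c < k \<and> w c \<and> vadd u v c} = (?A - ?B) \<union> (?B - ?A)"
    unfolding vadd_def by auto
  thus ?thesis unfolding vdot_def by (simp add: odd_card_sym_diff)
qed

lemma vdot_vadd_left: "vdot k (vadd u v) w \<longleftrightarrow> vdot k u w \<noteq> vdot k v w"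
  using vdot_vadd_right by (simp add: vdot_commute)

lemma dual_lin_vdot: "dual_lin k (vdot k w)"
  unfolding dual_lin_def by (simp add: vdot_vadd_right)

lemma vdot_nonzero:
  assumes "w \<in> Vsp k" and "w \<noteq> vzero"
  obtains e where "e \<in> Vsp k" and "vdot k w e"
proof -
  from assms(2) obtain c0 where "w c0" by auto
  with assms(1) have "c0 < k" unfolding Vsp_def using not_less by blast
  define e where "e = (\<lambda>c. c = c0)"
  have "e \<in> Vsp k" using \<open>c0 < k\<close> unfolding e_def Vsp_def by auto
  moreover have "{c. c < k \<and> w c \<and> e c} = {c0}" using \<open>w c0\<close> \<open>c0 < k\<close> unfolding e_def by auto
  hence "vdot k w e" unfolding vdot_def by simp
  ultimately show ?thesis by (rule that)
qed

lemma walsh_commute: "walsh k w u = walsh k u w"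
  unfolding walsh_def chi_def using vdot_commute[of k w u] by simp

lemma walsh_vadd_right: "walsh k w (vadd u v) = walsh k w u * walsh k w v"
  unfolding walsh_def chi_def by (simp add: vdot_vadd_right)

lemma walsh_vadd_left: "walsh k (vadd u v) w = walsh k u w * walsh k v w"
  unfolding walsh_def chi_def by (simp add: vdot_vadd_left)

lemma walsh_mult_self: "walsh k w u * walsh k w u = 1"
  unfolding walsh_def chi_def by simp

lemma walsh_vzero [simp]: "walsh k vzero u = 1" "walsh k w vzero = 1"
  unfolding walsh_def chi_def vdot_def by auto

lemma sum_walsh:
  assumes "u \<in> Vsp k"
  shows "(\<Sum>w\<in>Vsp k. walsh k w u) = (if u = vzero then 2 ^ k else 0)"
proof (cases "u = vzero")
  case True thus ?thesis by (simp add: card_Vsp)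
next
  case False
  then obtain e where e: "e \<in> Vsp k" "vdot k e u"
    using vdot_nonzero[OF assms] by (metis vdot_commute)
  have "(\<Sum>w\<in>Vsp k. walsh k w u) = (\<Sum>w\<in>Vsp k. walsh k (vadd w e) u)"
    using sum.reindex_bij_betw[OF bij_betw_vadd[OF e(1)], of "\<lambda>w. walsh k w u"] by simp
  also have "\<dots> = - (\<Sum>w\<in>Vsp k. walsh k w u)"
  proof -
    have "walsh k e u = -1"
      using e(2) by (simp add: walsh_def chi_def)
    thus ?thesis by (simp add: walsh_vadd_left sum_negf)
  qed
  finally show ?thesis using False by simp
qed

lemma sum_walsh_right:
  "w \<in> Vsp k \<Longrightarrow> (\<Sum>u\<in>Vsp k. walsh k w u) = (if w = vzero then 2 ^ k else 0)"
  using sum_walsh by (simp add: walsh_commute[of k w])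

definition walsh_transform :: "nat \<Rightarrow> ((nat \<Rightarrow> bool) \<Rightarrow> real) \<Rightarrow> (nat \<Rightarrow> bool) \<Rightarrow> real" where
  "walsh_transform k f w = (\<Sum>u\<in>Vsp k. f u * walsh k w u)"

lemma parseval_walsh:
  "(\<Sum>w\<in>Vsp k. (walsh_transform k f w)\<^sup>2) = 2 ^ k * (\<Sum>u\<in>Vsp k. (f u)\<^sup>2)"
proof -
  have "(\<Sum>w\<in>Vsp k. (walsh_transform k f w)\<^sup>2)
      = (\<Sum>w\<in>Vsp k. \<Sum>u\<in>Vsp k. \<Sum>v\<in>Vsp k. f u * f v * walsh k w (vadd u v))"
    by (simp add: walsh_transform_def power2_eq_square sum_product walsh_vadd_right mult_ac)
  also have "\<dots> = (\<Sum>u\<in>Vsp k. \<Sum>v\<in>Vsp k. \<Sum>w\<in>Vsp k. f u * f v * walsh k w (vadd u v))"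
    by (subst sum.swap) (intro sum.cong refl sum.swap)
  also have "\<dots> = (\<Sum>u\<in>Vsp k. \<Sum>v\<in>Vsp k. f u * f v * (\<Sum>w\<in>Vsp k. walsh k w (vadd u v)))"
    by (simp add: sum_distrib_left)
  also have "\<dots> = (\<Sum>u\<in>Vsp k. \<Sum>v\<in>Vsp k. if u = v then 2 ^ k * (f u)\<^sup>2 else 0)"
    by (intro sum.cong refl) (simp add: sum_walsh vadd_in_Vsp vadd_eq_vzero_iff power2_eq_square)
  also have "\<dots> = 2 ^ k * (\<Sum>u\<in>Vsp k. (f u)\<^sup>2)"
    by (simp add: sum_distrib_left)
  finally show ?thesis .
qed

lemma walsh_transform_shift_diff:
  assumes "a \<in> Vsp k"
  shows "walsh_transform k (\<lambda>u. f u - f (vadd u a)) w = walsh_transform k f w * (1 - walsh k w a)"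
proof -
  have "(\<Sum>u\<in>Vsp k. f (vadd u a) * walsh k w u)
      = (\<Sum>u\<in>Vsp k. f (vadd (vadd u a) a) * walsh k w (vadd u a))"
    using sum.reindex_bij_betw[OF bij_betw_vadd[OF assms], of "\<lambda>u. f (vadd u a) * walsh k w u"]
    by simp
  also have "\<dots> = walsh k w a * walsh_transform k f w"
    by (simp add: walsh_vadd_right walsh_transform_def sum_distrib_left mult_ac)
  finally show ?thesis
    by (simp add: walsh_transform_def left_diff_distrib sum_subtractf algebra_simps)
qed

lemma sum_shift_diff_sq:
  assumes "a \<in> Vsp k"
  shows "(\<Sum>u\<in>Vsp k. (f u - f (vadd u a))\<^sup>2)
    = 2 * (\<Sum>w\<in>Vsp k. (walsh_transform k f w)\<^sup>2 * (1 - walsh k w a)) / 2 ^ k"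
proof -
  have sq: "(1 - walsh k w a)\<^sup>2 = 2 * (1 - walsh k w a)" for w
    using walsh_mult_self[of k w a] by (simp add: power2_eq_square algebra_simps)
  have "2 ^ k * (\<Sum>u\<in>Vsp k. (f u - f (vadd u a))\<^sup>2)
      = (\<Sum>w\<in>Vsp k. (walsh_transform k f w)\<^sup>2 * (1 - walsh k w a)\<^sup>2)"
    by (simp add: parseval_walsh [symmetric] walsh_transform_shift_diff[OF assms] power_mult_distrib)
  also have "\<dots> = 2 * (\<Sum>w\<in>Vsp k. (walsh_transform k f w)\<^sup>2 * (1 - walsh k w a))"
    by (simp add: sq sum_distrib_left algebra_simps)
  finally show ?thesis
    by (simp add: field_simps)
qed

lemma variance_unifV_walsh:
  "variance_on (Vsp k) (unifV k) f = (\<Sum>w\<in>Vsp k - {vzero}. (walsh_transform k f w)\<^sup>2) / (2 ^ k * 2 ^ k)"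
proof -
  define m where "m = (\<Sum>u\<in>Vsp k. unifV k u * f u)"
  define g where "g u = f u - m" for u
  have m: "m = walsh_transform k f vzero / 2 ^ k"
    by (simp add: m_def unifV_def walsh_transform_def sum_divide_distrib)
  have g: "walsh_transform k g w = (if w = vzero then 0 else walsh_transform k f w)"
    if "w \<in> Vsp k" for w
  proof -
    have "walsh_transform k g w = walsh_transform k f w - m * (\<Sum>u\<in>Vsp k. walsh k w u)"
      by (simp add: walsh_transform_def g_def left_diff_distrib sum_subtractf sum_distrib_left)
    thus ?thesis
      using sum_walsh_right[OF that] by (simp add: m)
  qed
  have "variance_on (Vsp k) (unifV k) f = (\<Sum>u\<in>Vsp k. (g u)\<^sup>2) / 2 ^ k"
    unfolding variance_on_def m_def[symmetric] g_def by (simp add: unifV_def sum_divide_distrib)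
  also have "\<dots> = (\<Sum>w\<in>Vsp k. (walsh_transform k g w)\<^sup>2) / (2 ^ k * 2 ^ k)"
    by (simp add: parseval_walsh)
  also have "\<dots> = (\<Sum>w\<in>Vsp k - {vzero}. (walsh_transform k g w)\<^sup>2) / (2 ^ k * 2 ^ k)"
    by (simp add: g sum.remove[of "Vsp k" vzero])
  also have "\<dots> = (\<Sum>w\<in>Vsp k - {vzero}. (walsh_transform k f w)\<^sup>2) / (2 ^ k * 2 ^ k)"
    by (intro arg_cong2[where f = "(/)"] sum.cong) (auto simp: g)
  finally show ?thesis .
qed

lemma variance_unifV_pos:
  assumes "k \<ge> 1"
  shows "variance_on (Vsp k) (unifV k) (\<lambda>u. if u = vzero then 1 else 0) > 0"
proof -
  have "(1::nat) < 2 ^ k"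
    using assms by (intro one_less_power) auto
  hence "card (Vsp k - {vzero}) > 0"
    by (simp add: card_Vsp)
  moreover have "walsh_transform k (\<lambda>u. if u = vzero then 1 else 0) w = 1" for w
  proof -
    have "walsh_transform k (\<lambda>u. if u = vzero then 1 else 0) w = (\<Sum>u\<in>Vsp k. if u = vzero then 1 else 0)"
      unfolding walsh_transform_def by (intro sum.cong) auto
    thus ?thesis by simp
  qed
  ultimately show ?thesis by (simp add: variance_unifV_walsh)
qed

definition cayley_kernel :: "'j set \<Rightarrow> ('j \<Rightarrow> nat \<Rightarrow> bool) \<Rightarrow> (nat \<Rightarrow> bool) \<Rightarrow> (nat \<Rightarrow> bool) \<Rightarrow> real" where
  "cayley_kernel J z u v = real (card {j\<in>J. v = vadd u (z j)}) / real (card J)"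

lemma Ki_eq_cayley_kernel: "i < n \<Longrightarrow> Ki n i z = cayley_kernel ({0..<n} - {i}) z"
  by (simp add: fun_eq_iff Ki_def cayley_kernel_def of_nat_diff)

lemma sum_card_fibres:
  assumes "finite J" "finite X" "\<And>j. j \<in> J \<Longrightarrow> g j \<in> X"
  shows "(\<Sum>y\<in>X. real (card {j\<in>J. y = g j}) * h y) = (\<Sum>j\<in>J. h (g j))"
proof -
  have "real (card {j\<in>J. y = g j}) * h y = (\<Sum>j\<in>J. if y = g j then h y else 0)" for y
    using sum.inter_filter[OF assms(1), of "\<lambda>_. h y" "\<lambda>j. y = g j"] by (simp only: sum_constant)
  hence "(\<Sum>y\<in>X. real (card {j\<in>J. y = g j}) * h y) = (\<Sum>y\<in>X. \<Sum>j\<in>J. if y = g j then h y else 0)"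
    by simp
  also have "\<dots> = (\<Sum>j\<in>J. \<Sum>y\<in>X. if y = g j then h y else 0)"
    by (rule sum.swap)
  also have "\<dots> = (\<Sum>j\<in>J. h (g j))"
    using assms by simp
  finally show ?thesis .
qed

lemma dirichlet_form_cayley_kernel:
  assumes "finite J" and z: "\<And>j. j \<in> J \<Longrightarrow> z j \<in> Vsp k"
  shows "dirichlet_form (Vsp k) (unifV k) (cayley_kernel J z) f
    = (\<Sum>w\<in>Vsp k. (walsh_transform k f w)\<^sup>2 * (\<Sum>j\<in>J. 1 - walsh k w (z j)))
        / (real (card J) * 2 ^ k * 2 ^ k)"
proof -
  let ?E = "\<lambda>j. \<Sum>w\<in>Vsp k. (walsh_transform k f w)\<^sup>2 * (1 - walsh k w (z j))"
  have "dirichlet_form (Vsp k) (unifV k) (cayley_kernel J z) f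
      = (\<Sum>u\<in>Vsp k. \<Sum>v\<in>Vsp k. real (card {j\<in>J. v = vadd u (z j)}) * (f u - f v)\<^sup>2)
          / (2 * 2 ^ k * real (card J))"
    by (simp add: dirichlet_form_def cayley_kernel_def unifV_def sum_divide_distrib mult_ac)
  also have "\<dots> = (\<Sum>u\<in>Vsp k. \<Sum>j\<in>J. (f u - f (vadd u (z j)))\<^sup>2) / (2 * 2 ^ k * real (card J))"
    using assms by (simp add: sum_card_fibres vadd_in_Vsp)
  also have "\<dots> = (\<Sum>j\<in>J. 2 * ?E j / 2 ^ k) / (2 * 2 ^ k * real (card J))"
    by (subst sum.swap) (simp add: sum_shift_diff_sq z)
  also have "\<dots> = (\<Sum>j\<in>J. ?E j) / (real (card J) * 2 ^ k * 2 ^ k)"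
  proof -
    have "(\<Sum>j\<in>J. 2 * ?E j / 2 ^ k) = 2 * (\<Sum>j\<in>J. ?E j) / 2 ^ k"
      by (simp only: sum_divide_distrib sum_distrib_left)
    thus ?thesis by (simp add: mult_ac)
  qed
  also have "\<dots> = (\<Sum>w\<in>Vsp k. (walsh_transform k f w)\<^sup>2 * (\<Sum>j\<in>J. 1 - walsh k w (z j)))
        / (real (card J) * 2 ^ k * 2 ^ k)"
    by (subst sum.swap) (simp add: sum_distrib_left)
  finally show ?thesis .
qed

lemma cayley_kernel_poincare:
  assumes "finite J" "J \<noteq> {}" and z: "\<And>j. j \<in> J \<Longrightarrow> z j \<in> Vsp k"
    and eigenvalue_bound:
      "\<And>w. w \<in> Vsp k \<Longrightarrow> w \<noteq> vzero \<Longrightarrow> \<gamma> * real (card J) \<le> (\<Sum>j\<in>J. 1 - walsh k w (z j))"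
  shows "\<gamma> * variance_on (Vsp k) (unifV k) f \<le> dirichlet_form (Vsp k) (unifV k) (cayley_kernel J z) f"
proof -
  let ?F = "\<lambda>w. (walsh_transform k f w)\<^sup>2" and ?D = "\<lambda>w. \<Sum>j\<in>J. 1 - walsh k w (z j)"
  have J: "real (card J) > 0"
    using assms(1,2) by (simp add: card_gt_0_iff)
  have "\<gamma> * (\<Sum>w\<in>Vsp k - {vzero}. ?F w) * real (card J) = (\<Sum>w\<in>Vsp k - {vzero}. ?F w * (\<gamma> * real (card J)))"
    by (simp add: sum_distrib_left sum_distrib_right mult_ac)
  also have "\<dots> \<le> (\<Sum>w\<in>Vsp k - {vzero}. ?F w * ?D w)"
    by (intro sum_mono mult_left_mono eigenvalue_bound) auto
  also have "\<dots> \<le> (\<Sum>w\<in>Vsp k. ?F w * ?D w)"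
    by (rule sum_mono2) auto
  finally show ?thesis
    using J by (simp add: variance_unifV_walsh dirichlet_form_cayley_kernel assms(1) z field_simps)
qed

text \<open>Without a function of positive variance the admissible \<open>\<gamma>\<close> would be unbounded and
  \<open>Sup\<close> would return a junk value.\<close>

lemma spectral_gap_ge:
  assumes "\<And>f. \<gamma> * variance_on X \<rho> f \<le> dirichlet_form X \<rho> K f"
    and "variance_on X \<rho> g > 0"
  shows "\<gamma> \<le> spectral_gap X \<rho> K"
  unfolding spectral_gap_def
proof (rule cSup_upper)
  show "\<gamma> \<in> {\<gamma>. \<forall>f. \<gamma> * variance_on X \<rho> f \<le> dirichlet_form X \<rho> K f}"
    using assms(1) by blast
  show "bdd_above {\<gamma>. \<forall>f. \<gamma> * variance_on X \<rho> f \<le> dirichlet_form X \<rho> K f}"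
    using assms(2) by (intro bdd_aboveI[of _ "dirichlet_form X \<rho> K g / variance_on X \<rho> g"])
      (simp add: pos_le_divide_eq)
qed

lemma Gtr_walsh_sum_bound:
  assumes "i < n" "z(i := u) \<in> Gtr n k" "w \<in> Vsp k" "w \<noteq> vzero"
  shows "(\<Sum>j\<in>{0..<n} - {i}. walsh k w (z j)) \<le> real n / 4 + 1"
proof -
  obtain e where "e \<in> Vsp k" "vdot k w e"
    using vdot_nonzero[OF assms(3,4)] .
  hence "\<bar>Sxi n (vdot k w) (z(i := u))\<bar> \<le> real n / 4"
    using assms(2) dual_lin_vdot unfolding Gtr_def by blast
  moreover have "Sxi n (vdot k w) (z(i := u)) = (\<Sum>j\<in>{0..<n}. walsh k w ((z(i := u)) j))"
    by (simp add: Sxi_def walsh_def lessThan_atLeast0)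
  also have "\<dots> = walsh k w u + (\<Sum>j\<in>{0..<n} - {i}. walsh k w ((z(i := u)) j))"
    using assms(1) by (subst sum.remove[of _ i]) auto
  also have "\<dots> = walsh k w u + (\<Sum>j\<in>{0..<n} - {i}. walsh k w (z j))"
    by simp
  moreover have "walsh k w u \<ge> -1"
    by (simp add: walsh_def chi_def)
  ultimately show ?thesis by linarith
qed

theorem proposition3p4:
  "\<exists>N::nat. \<forall>n\<ge>N. \<forall>k. 1 \<le> k \<and> k \<le> n \<longrightarrow>
     (\<forall>i<n. \<forall>z :: nat \<Rightarrow> nat \<Rightarrow> bool.
        (\<forall>j<n. j \<noteq> i \<longrightarrow> z j \<in> Vsp k) \<longrightarrow>
        (\<exists>u\<in>Vsp k. z(i := u) \<in> Gtr n k) \<longrightarrow>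
        spectral_gap (Vsp k) (unifV k) (Ki n i z) \<ge> 1/2)"
proof (intro exI[of _ 6] allI impI)
  fix n k i and z :: "nat \<Rightarrow> nat \<Rightarrow> bool"
  assume n: "6 \<le> n" and k: "1 \<le> k \<and> k \<le> n" and i: "i < n"
    and z: "\<forall>j<n. j \<noteq> i \<longrightarrow> z j \<in> Vsp k" and "\<exists>u\<in>Vsp k. z(i := u) \<in> Gtr n k"
  then obtain u where good: "z(i := u) \<in> Gtr n k" by blast
  let ?J = "{0..<n} - {i}"
  have eigenvalue_bound: "1/2 * real (card ?J) \<le> (\<Sum>j\<in>?J. 1 - walsh k w (z j))"
    if "w \<in> Vsp k" "w \<noteq> vzero" for w
    using Gtr_walsh_sum_bound[OF i good that] n i by (simp add: sum_subtractf of_nat_diff)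
  have "?J \<noteq> {}"
    using n i card_Diff_singleton[of i "{0..<n}"] by force
  hence "1/2 * variance_on (Vsp k) (unifV k) f \<le> dirichlet_form (Vsp k) (unifV k) (Ki n i z) f" for f
    unfolding Ki_eq_cayley_kernel[OF i] using eigenvalue_bound z by (intro cayley_kernel_poincare) auto
  thus "spectral_gap (Vsp k) (unifV k) (Ki n i z) \<ge> 1/2"
    using spectral_gap_ge variance_unifV_pos k by blast
qed

end
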